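(* For all $x\in\mathbb{R}^n$, $\lambda\in\mathbb{R}^m$ with $x_i\ge0$ for $i\in[n_b]$ and $\lambda_j\ge0$ for $j\in[m_I]$, $$\operatorname{dist}((x,\lambda),\Omega)\le\theta\big(\|(x,\lambda)\|^2+1\big)^{1/2}\operatorname{dist}(0,T_\ell(x,\lambda)).$$
   Context: LP: $\min_{x\in\mathbb{R}^n}c^\top x$ s.t. $A_Ix\le b_I$, $A_Ex=b_E$, $x_1,\dots,x_{n_b}\ge0$, where $A_I\in\mathbb{R}^{m_I\times n}$, $A_E\in\mathbb{R}^{m_E\times n}$, $m=m_I+m_E$, $A=[A_I;A_E]$, $b=[b_I;b_E]$, $n_b\in[n]$. Write $x_b=(x_1,\dots,x_{n_b})$, $\lambda_I=(\lambda_1,\dots,\lambda_{m_I})$. For $v\in\mathbb{R}^N$ and $k\le N$, $[v]_+^k$ (resp. $[v]_-^k$) is the projection of $v$ onto $\mathbb{R}_+^k\times\mathbb{R}^{N-k}$ (resp. $\mathbb{R}_-^k\times\mathbb{R}^{N-k}$). $T_\ell(x,\lambda)=\{(v,u)\in\mathbb{R}^{n+m}: v\in c+A^\top\lambda+N_{\{x_b\ge0\}}(x),\ u\in b-Ax+N_{\{\lambda_I\ge0\}}(\lambda)\}$, where $N_S$ denotes the normal cone of the convex set $S$ (empty outside $S$); $\operatorname{dist}(0,\emptyset)=+\infty$. Assume the LP has an optimal solution, so that $\Omega:=T_\ell^{-1}(0,0)=\{(x,\lambda):x_b\ge0,\lambda_I\ge0,\ c^\top x+b^\top\lambda=0,\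 [A^\top\lambda+c]_-^{n_b}=0,\ [Ax-b]_+^{m_I}=0\}$ is nonempty. $\theta$ is the smallest constant such that $\operatorname{dist}((x,\lambda),\Omega)\le\theta\|[c^\top x+b^\top\lambda;\ [A^\top\lambda+c]_-^{n_b};\ [Ax-b]_+^{m_I}]\|$ for all $(x,\lambda)$ with $x_b\ge0$, $\lambda_I\ge0$. Norms and distances are Euclidean. *)

theory Defs
  imports Complex_Main
begin

text \<open>Vectors of R^k are encoded as functions nat \<Rightarrow> real vanishing at indices \<ge> k;
  matrices of size m x n as functions nat \<Rightarrow> nat \<Rightarrow> real (row i, column j), only
  entries i < m, j < n are used.\<close>

definition vecs :: "nat \<Rightarrow> (nat \<Rightarrow> real) set" where
  "vecs k = {v. \<forall>i\<ge>k. v i = 0}"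

definition ip :: "nat \<Rightarrow> (nat \<Rightarrow> real) \<Rightarrow> (nat \<Rightarrow> real) \<Rightarrow> real" where
  "ip k u v = (\<Sum>i<k. u i * v i)"

definition nrm :: "nat \<Rightarrow> (nat \<Rightarrow> real) \<Rightarrow> real" where
  "nrm k v = sqrt (ip k v v)"

definition pnrm :: "nat \<Rightarrow> nat \<Rightarrow> (nat \<Rightarrow> real) \<Rightarrow> (nat \<Rightarrow> real) \<Rightarrow> real" where
  "pnrm n m u w = sqrt ((nrm n u)\<^sup>2 + (nrm m w)\<^sup>2)"

definition mulv :: "nat \<Rightarrow> nat \<Rightarrow> (nat \<Rightarrow> nat \<Rightarrow> real) \<Rightarrow> (nat \<Rightarrow> real) \<Rightarrow> (nat \<Rightarrow> real)" where
  "mulv m n A x = (\<lambda>i. if i < m then (\<Sum>j<n. A i j * x j) else 0)"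

definition tmulv :: "nat \<Rightarrow> nat \<Rightarrow> (nat \<Rightarrow> nat \<Rightarrow> real) \<Rightarrow> (nat \<Rightarrow> real) \<Rightarrow> (nat \<Rightarrow> real)" where
  "tmulv m n A y = (\<lambda>j. if j < n then (\<Sum>i<m. A i j * y i) else 0)"

definition projp :: "nat \<Rightarrow> (nat \<Rightarrow> real) \<Rightarrow> (nat \<Rightarrow> real)" where
  "projp k v = (\<lambda>i. if i < k then max (v i) 0 else v i)"

definition projm :: "nat \<Rightarrow> (nat \<Rightarrow> real) \<Rightarrow> (nat \<Rightarrow> real)" where
  "projm k v = (\<lambda>i. if i < k then min (v i) 0 else v i)"

definition ncone :: "nat \<Rightarrow> (nat \<Rightarrow> real) set \<Rightarrow> (nat \<Rightarrow> real) \<Rightarrow> (nat \<Rightarrow> real) set" where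
  "ncone N S x = (if x \<in> S then {v \<in> vecs N. \<forall>y\<in>S. ip N v (\<lambda>i. y i - x i) \<le> 0} else {})"

definition nonneg_first :: "nat \<Rightarrow> nat \<Rightarrow> (nat \<Rightarrow> real) set" where
  "nonneg_first N k = {z \<in> vecs N. \<forall>i<k. 0 \<le> z i}"

definition lp_feasible where
  "lp_feasible n m mI nb A b x \<longleftrightarrow> x \<in> vecs n \<and>
     (\<forall>i<mI. mulv m n A x i \<le> b i) \<and> (\<forall>i. mI \<le> i \<and> i < m \<longrightarrow> mulv m n A x i = b i) \<and>
     (\<forall>i<nb. 0 \<le> x i)"

definition lp_has_optimal where
  "lp_has_optimal n m mI nb A b c \<longleftrightarrow>
     (\<exists>x. lp_feasible n m mI nb A b x \<and> (\<forall>y. lp_feasible n m mI nb A b y \<longrightarrow> ip n c x \<le> ip n c y))"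

definition Tl where
  "Tl n m mI nb A b c x y =
     {(v, u). v \<in> vecs n \<and> u \<in> vecs m \<and>
        (\<exists>w \<in> ncone n (nonneg_first n nb) x. v = (\<lambda>i. c i + tmulv m n A y i + w i)) \<and>
        (\<exists>w \<in> ncone m (nonneg_first m mI) y. u = (\<lambda>i. b i - mulv m n A x i + w i))}"

definition Omega where
  "Omega n m mI nb A b c =
     {(x, y). x \<in> vecs n \<and> y \<in> vecs m \<and> ((\<lambda>_. 0), (\<lambda>_. 0)) \<in> Tl n m mI nb A b c x y}"

definition dist_Omega where
  "dist_Omega n m mI nb A b c x y =
     Inf {pnrm n m (\<lambda>i. x i - x' i) (\<lambda>i. y i - y' i) | x' y'. (x', y') \<in> Omega n m mI nb A b c}"

definition dist0_Tl where
  "dist0_Tl n m mI nb A b c x y = Inf {pnrm n m v u | v u. (v, u) \<in> Tl n m mI nb A b c x y}"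

definition residual where
  "residual n m mI nb A b c x y =
     sqrt ((ip n c x + ip m b y)\<^sup>2
       + (nrm n (projm nb (\<lambda>i. tmulv m n A y i + c i)))\<^sup>2
       + (nrm m (projp mI (\<lambda>i. mulv m n A x i - b i)))\<^sup>2)"

definition theta where
  "theta n m mI nb A b c =
     Inf {t. 0 \<le> t \<and> (\<forall>x y. x \<in> nonneg_first n nb \<and> y \<in> nonneg_first m mI \<longrightarrow>
              dist_Omega n m mI nb A b c x y \<le> t * residual n m mI nb A b c x y)}"

end

theory Submission
  imports Defs "HOL-Analysis.Convex"
begin

(* Hoffman's error bound: if a system of linear inequalities R is solvable, the distance of any z
   to its solution set is at most a constant times the total violation of R at z.  Lift R by a
   point p of the solution set and a bound t >= |z i - p i|, and eliminate p by Fourier-Motzkin;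
   by the affine Farkas lemma every row of the projected system in (z, t) is implied by
   t >= H * violation(z).

   Omega is the solution set of such a system in the variables (x, lambda): primal and dual
   feasibility and a zero duality gap.  It is nonempty by LP strong duality (affine Farkas applied
   to the optimal value), and the violation of its rows is bounded by the residual, so the set of
   admissible constants defining theta is nonempty.

   For (v, u) in T_l(x, lambda) the normal-cone parts are orthogonal to x resp. lambda, so
   c'x + b'lambda = v'x + u'lambda, while the projected infeasibilities are dominated componentwise
   by |v| and |u|.  Cauchy-Schwarz bounds the residual by sqrt(||(x, lambda)||^2 + 1) ||(v, u)||,
   and taking infima gives the claim. *)

section \<open>Inner products and norms\<close>

lemma sum_lessThan_add: "(\<Sum>i<k + l. f i) = (\<Sum>i<k. f i) + (\<Sum>i<l. f (k + i) :: real)" for k l :: nat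
  by (induction l) simp_all

lemma sum_atLeastLessThan_mult:
  "(\<Sum>i\<in>{k..<l}. u i * g i) = (\<Sum>i<l. (if k \<le> i then u i else 0) * g i :: real)" for k l :: nat
proof -
  have "(\<Sum>i\<in>{k..<l}. u i * g i) = (\<Sum>i\<in>{i \<in> {..<l}. k \<le> i}. u i * g i)"
    by (rule sum.cong) auto
  also have "\<dots> = (\<Sum>i<l. if k \<le> i then u i * g i else 0)"
    by (rule sum.inter_filter) simp
  also have "\<dots> = (\<Sum>i<l. (if k \<le> i then u i else 0) * g i)"
    by (rule sum.cong) auto
  finally show ?thesis .
qed

lemma ip_add_left: "ip N (\<lambda>i. a i + a' i) z = ip N a z + ip N a' z"
  by (simp add: ip_def sum.distrib distrib_right)

lemma ip_diff_left: "ip N (\<lambda>i. a i - a' i) z = ip N a z - ip N a' z"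
  by (simp add: ip_def sum_subtractf left_diff_distrib)

lemma ip_uminus_left: "ip N (\<lambda>i. - a i) z = - ip N a z"
  by (simp add: ip_def sum_negf)

lemma ip_scale_left: "ip N (\<lambda>i. s * a i) z = s * ip N a z"
  by (simp add: ip_def sum_distrib_left mult.assoc)

lemma ip_add_right: "ip N a (\<lambda>i. x i + x' i) = ip N a x + ip N a x'"
  by (simp add: ip_def sum.distrib distrib_left)

lemma ip_diff_right: "ip N a (\<lambda>i. x i - x' i) = ip N a x - ip N a x'"
  by (simp add: ip_def sum_subtractf right_diff_distrib)

lemma ip_uminus_right: "ip N a (\<lambda>i. - x i) = - ip N a x"
  by (simp add: ip_def sum_negf)

lemma ip_scale_right: "ip N a (\<lambda>i. s * x i) = s * ip N a x"
  by (simp add: ip_def sum_distrib_left algebra_simps)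

lemma ip_zero_left [simp]: "ip N (\<lambda>_. 0) z = 0"
  by (simp add: ip_def)

lemma ip_0 [simp]: "ip 0 a z = 0"
  by (simp add: ip_def)

lemma ip_Suc: "ip (Suc N) a z = ip N a z + a N * z N"
  by (simp add: ip_def)

lemma ip_cong:
  "(\<And>i. i < N \<Longrightarrow> a i = a' i) \<Longrightarrow> (\<And>i. i < N \<Longrightarrow> z i = z' i) \<Longrightarrow> ip N a z = ip N a' z'"
  by (simp add: ip_def)

lemma ip_upd_right [simp]: "ip N a (z(N := s)) = ip N a z"
  by (rule ip_cong) auto

lemma ip_upd_left [simp]: "ip N (a(N := s)) z = ip N a z"
  by (rule ip_cong) auto

lemma ip_unit_left: "j < N \<Longrightarrow> ip N (\<lambda>i. if i = j then d else 0) z = d * z j"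
  by (simp add: ip_def if_distrib[of "\<lambda>c. c * _"] cong: if_cong)

lemma ip_unit_right: "j < N \<Longrightarrow> ip N a (\<lambda>i. if i = j then d else 0) = a j * d"
  by (simp add: ip_def if_distrib cong: if_cong)

lemma ip_self_nonneg: "0 \<le> ip N v v"
  unfolding ip_def by (rule sum_nonneg) simp

lemma nrm_sq: "(nrm N v)\<^sup>2 = (\<Sum>i<N. (v i)\<^sup>2)"
  using ip_self_nonneg[of N v] by (simp add: nrm_def ip_def power2_eq_square)

lemma nrm_nonneg: "0 \<le> nrm N v"
  by (simp add: nrm_def ip_self_nonneg)

lemma abs_le_nrm: "j < N \<Longrightarrow> \<bar>v j\<bar> \<le> nrm N v"
proof -
  assume "j < N"
  then have "(v j)\<^sup>2 \<le> ip N v v"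
    using member_le_sum[of j "{..<N}" "\<lambda>i. (v i)\<^sup>2"] by (simp add: ip_def power2_eq_square)
  then show ?thesis by (metis nrm_def real_sqrt_abs real_sqrt_le_mono)
qed

lemma nrm_le_nrm: "(\<And>i. i < N \<Longrightarrow> \<bar>f i\<bar> \<le> \<bar>g i\<bar>) \<Longrightarrow> nrm N f \<le> nrm N g"
  unfolding nrm_def ip_def
  by (intro real_sqrt_le_mono sum_mono) (metis abs_le_square_iff lessThan_iff power2_eq_square)

definition join :: "nat \<Rightarrow> (nat \<Rightarrow> real) \<Rightarrow> (nat \<Rightarrow> real) \<Rightarrow> nat \<Rightarrow> real" where
  "join n x y = (\<lambda>i. if i < n then x i else y (i - n))"

lemma ip_join: "ip (n + m) (join n a a') (join n x y) = ip n a x + ip m a' y"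
  unfolding ip_def sum_lessThan_add by (simp add: join_def)

lemma ip_join_le_pnrm: "(ip n v x + ip m u y)\<^sup>2 \<le> (pnrm n m v u)\<^sup>2 * (pnrm n m x y)\<^sup>2"
proof -
  have sq: "(pnrm n m v u)\<^sup>2 = (\<Sum>i<n + m. (join n v u i)\<^sup>2)" for v u
    unfolding pnrm_def sum_lessThan_add by (simp add: nrm_sq join_def add_nonneg_nonneg sum_nonneg)
  show ?thesis
    using Cauchy_Schwarz_ineq_sum[of "join n v u" "join n x y" "{..<n + m}"]
    by (simp only: sq flip: ip_def ip_join)
qed

lemma pnrm_le_sqrt_dim:
  assumes "\<forall>i<n. \<bar>u i\<bar> \<le> D" and "\<forall>i<m. \<bar>w i\<bar> \<le> D" and "0 \<le> D"
  shows "pnrm n m u w \<le> sqrt (real (n + m)) * D"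
proof -
  have sq: "(\<Sum>i<k. (f i)\<^sup>2) \<le> real k * D\<^sup>2" if "\<forall>i<k. \<bar>f i\<bar> \<le> D" for k and f :: "nat \<Rightarrow> real"
    using sum_mono[of "{..<k}" "\<lambda>i. (f i)\<^sup>2" "\<lambda>_. D\<^sup>2"] that
    by (simp add: abs_le_square_iff[symmetric] abs_of_nonneg \<open>0 \<le> D\<close>)
  have "(nrm n u)\<^sup>2 + (nrm m w)\<^sup>2 \<le> (sqrt (real (n + m)) * D)\<^sup>2"
    using sq[OF assms(1)] sq[OF assms(2)] by (simp add: nrm_sq power_mult_distrib algebra_simps)
  then show ?thesis
    unfolding pnrm_def using \<open>0 \<le> D\<close> by (simp add: real_le_lsqrt)
qed

lemma le_cInf_mult:
  fixes X :: "real set"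
  assumes "X \<noteq> {}" and "0 \<le> r" and "\<And>t. t \<in> X \<Longrightarrow> d \<le> t * r"
  shows "d \<le> Inf X * r"
proof (cases "r = 0")
  case True
  then show ?thesis using assms(1,3) by auto
next
  case False
  with assms(2) have "0 < r" by simp
  have "d / r \<le> Inf X"
    by (rule cInf_greatest[OF assms(1)]) (use assms(3) \<open>0 < r\<close> in \<open>simp add: divide_le_eq\<close>)
  then show ?thesis using \<open>0 < r\<close> by (simp add: divide_le_eq)
qed

section \<open>Farkas lemma by Fourier--Motzkin elimination\<close>

(* A pair (a, beta) stands for the inequality ip N a z <= beta. *)
type_synonym ineq = "(nat \<Rightarrow> real) \<times> real"

definition satisfies :: "nat \<Rightarrow> ineq list \<Rightarrow> (nat \<Rightarrow> real) \<Rightarrow> bool" where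
  "satisfies N R z \<longleftrightarrow> (\<forall>r\<in>set R. ip N (fst r) z \<le> snd r)"

lemma satisfies_cong: "(\<And>i. i < N \<Longrightarrow> z i = z' i) \<Longrightarrow> satisfies N R z = satisfies N R z'"
  unfolding satisfies_def by (metis ip_cong)

lemma satisfies_Nil [simp]: "satisfies N [] z"
  by (simp add: satisfies_def)

lemma satisfies_Cons [simp]: "satisfies N (r # R) z \<longleftrightarrow> ip N (fst r) z \<le> snd r \<and> satisfies N R z"
  by (simp add: satisfies_def)

lemma satisfies_append [simp]: "satisfies N (R @ R') z \<longleftrightarrow> satisfies N R z \<and> satisfies N R' z"
  by (auto simp: satisfies_def)

lemma satisfies_map_upt [simp]:
  "satisfies N (map f [k..<l]) z \<longleftrightarrow> (\<forall>i. k \<le> i \<and> i < l \<longrightarrow> ip N (fst (f i)) z \<le> snd (f i))"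
  by (auto simp: satisfies_def)

definition ineq_add :: "ineq \<Rightarrow> ineq \<Rightarrow> ineq" where
  "ineq_add r s = ((\<lambda>i. fst r i + fst s i), snd r + snd s)"

definition ineq_scale :: "real \<Rightarrow> ineq \<Rightarrow> ineq" where
  "ineq_scale t r = ((\<lambda>i. t * fst r i), t * snd r)"

definition ineq_zero :: ineq where
  "ineq_zero = ((\<lambda>_. 0), 0)"

inductive_set ineq_cone :: "ineq list \<Rightarrow> ineq set" for R where
  zero: "ineq_zero \<in> ineq_cone R"
| gen: "r \<in> set R \<Longrightarrow> r \<in> ineq_cone R"
| add: "r \<in> ineq_cone R \<Longrightarrow> s \<in> ineq_cone R \<Longrightarrow> ineq_add r s \<in> ineq_cone R"
| scale: "r \<in> ineq_cone R \<Longrightarrow> 0 \<le> t \<Longrightarrow> ineq_scale t r \<in> ineq_cone R"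

lemma ineq_cone_valid: "e \<in> ineq_cone R \<Longrightarrow> satisfies N R z \<Longrightarrow> ip N (fst e) z \<le> snd e"
proof (induction rule: ineq_cone.induct)
  case zero
  then show ?case by (simp add: ineq_zero_def)
next
  case (gen r)
  then show ?case by (simp add: satisfies_def)
next
  case (add r s)
  then show ?case by (simp add: ineq_add_def ip_add_left)
next
  case (scale r t)
  then show ?case by (simp add: ineq_scale_def ip_scale_left mult_left_mono)
qed

lemma ineq_cone_subset: "set R' \<subseteq> ineq_cone R \<Longrightarrow> ineq_cone R' \<subseteq> ineq_cone R"
proof
  show "e \<in> ineq_cone R" if "set R' \<subseteq> ineq_cone R" "e \<in> ineq_cone R'" for e
    using that(2,1) by induction (auto intro: ineq_cone.intros)
qed

lemma ineq_cone_coord_zero: "e \<in> ineq_cone R \<Longrightarrow> \<forall>r\<in>set R. fst r k = 0 \<Longrightarrow> fst e k = 0"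
  by (induction rule: ineq_cone.induct) (auto simp: ineq_zero_def ineq_add_def ineq_scale_def)

lemma ineq_cone_append:
  "e \<in> ineq_cone (R @ R') \<Longrightarrow> \<exists>r\<in>ineq_cone R. \<exists>r'\<in>ineq_cone R'. e = ineq_add r r'"
proof (induction rule: ineq_cone.induct)
  case zero
  show ?case
    by (intro bexI[OF _ ineq_cone.zero]) (simp add: ineq_add_def ineq_zero_def)
next
  case (gen r)
  have "ineq_add r ineq_zero = r" "ineq_add ineq_zero r = r"
    by (simp_all add: ineq_add_def ineq_zero_def)
  with gen show ?case by (metis Un_iff ineq_cone.gen ineq_cone.zero set_append)
next
  case (add r s)
  then obtain r1 r2 s1 s2 where "r1 \<in> ineq_cone R" "r2 \<in> ineq_cone R'" "r = ineq_add r1 r2"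
    "s1 \<in> ineq_cone R" "s2 \<in> ineq_cone R'" "s = ineq_add s1 s2" by blast
  moreover have "ineq_add (ineq_add r1 r2) (ineq_add s1 s2) = ineq_add (ineq_add r1 s1) (ineq_add r2 s2)"
    by (simp add: ineq_add_def algebra_simps)
  ultimately show ?case by (metis ineq_cone.add)
next
  case (scale r t)
  then obtain r1 r2 where "r1 \<in> ineq_cone R" "r2 \<in> ineq_cone R'" "r = ineq_add r1 r2" by blast
  moreover have "ineq_scale t (ineq_add r1 r2) = ineq_add (ineq_scale t r1) (ineq_scale t r2)"
    by (simp add: ineq_add_def ineq_scale_def algebra_simps)
  ultimately show ?case using scale.hyps(2) by (metis ineq_cone.scale)
qed

lemma ineq_cone_map_linear:
  assumes "\<And>r s. f (ineq_add r s) = ineq_add (f r) (f s)"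
    and "\<And>t r. f (ineq_scale t r) = ineq_scale t (f r)" and "f ineq_zero = ineq_zero"
  shows "e \<in> ineq_cone (map f R) \<Longrightarrow> \<exists>e'\<in>ineq_cone R. e = f e'"
proof (induction rule: ineq_cone.induct)
  case zero
  then show ?case using assms(3) ineq_cone.zero by metis
next
  case (gen r)
  then show ?case using ineq_cone.gen by auto
next
  case (add r s)
  then show ?case using assms(1) ineq_cone.add by metis
next
  case (scale r t)
  then show ?case using assms(2) ineq_cone.scale by metis
qed

lemma ineq_cone_single: "e \<in> ineq_cone [r] \<Longrightarrow> \<exists>\<mu>\<ge>0. e = ineq_scale \<mu> r"
proof (induction rule: ineq_cone.induct)
  case zero
  show ?case by (intro exI[of _ 0]) (simp add: ineq_scale_def ineq_zero_def)
next
  case (gen r)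
  then show ?case by (intro exI[of _ 1]) (simp add: ineq_scale_def)
next
  case (add s s')
  then obtain \<mu> \<mu>' where "0 \<le> \<mu>" "s = ineq_scale \<mu> r" "0 \<le> \<mu>'" "s' = ineq_scale \<mu>' r" by blast
  then show ?case
    by (intro exI[of _ "\<mu> + \<mu>'"]) (simp add: ineq_scale_def ineq_add_def distrib_right)
next
  case (scale s t)
  then obtain \<mu> where "0 \<le> \<mu>" "s = ineq_scale \<mu> r" by blast
  then show ?case using scale.hyps(2)
    by (intro exI[of _ "t * \<mu>"]) (simp add: ineq_scale_def mult.assoc)
qed

lemma ineq_cone_map_coeffs:
  fixes f :: "'a \<Rightarrow> ineq"
  shows "e \<in> ineq_cone (map f xs) \<Longrightarrow> \<exists>u. (\<forall>i. 0 \<le> u i) \<and>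
     e = ((\<lambda>j. \<Sum>i\<in>set xs. u i * fst (f i) j), (\<Sum>i\<in>set xs. u i * snd (f i)))"
proof (induction rule: ineq_cone.induct)
  case zero
  show ?case by (intro exI[of _ "\<lambda>_. 0"]) (simp add: ineq_zero_def)
next
  case (gen r)
  then obtain i0 where i0: "i0 \<in> set xs" "r = f i0" by auto
  let ?u = "\<lambda>i. if i = i0 then 1 else 0 :: real"
  have "(\<Sum>i\<in>set xs. ?u i * h i) = (\<Sum>i\<in>set xs. if i = i0 then h i0 else 0)" for h :: "_ \<Rightarrow> real"
    by (rule sum.cong) auto
  then have "(\<Sum>i\<in>set xs. ?u i * h i) = h i0" for h :: "_ \<Rightarrow> real"
    using i0(1) by simp
  then show ?case using i0(2) by (intro exI[of _ ?u]) simp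
next
  case (add r s)
  then obtain u v where "\<forall>i. 0 \<le> u i" "r = ((\<lambda>j. \<Sum>i\<in>set xs. u i * fst (f i) j), (\<Sum>i\<in>set xs. u i * snd (f i)))"
    "\<forall>i. 0 \<le> v i" "s = ((\<lambda>j. \<Sum>i\<in>set xs. v i * fst (f i) j), (\<Sum>i\<in>set xs. v i * snd (f i)))"
    by blast
  then show ?case
    by (intro exI[of _ "\<lambda>i. u i + v i"]) (simp add: ineq_add_def distrib_right sum.distrib)
next
  case (scale r t)
  then obtain u where "\<forall>i. 0 \<le> u i" "r = ((\<lambda>j. \<Sum>i\<in>set xs. u i * fst (f i) j), (\<Sum>i\<in>set xs. u i * snd (f i)))"
    by blast
  then show ?case using scale.hyps(2)
    by (intro exI[of _ "\<lambda>i. t * u i"]) (simp add: ineq_scale_def sum_distrib_left mult.assoc)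
qed

definition fm_comb :: "nat \<Rightarrow> ineq \<Rightarrow> ineq \<Rightarrow> ineq" where
  "fm_comb N p q = ineq_add (ineq_scale (- fst q N) p) (ineq_scale (fst p N) q)"

definition fm_elim :: "nat \<Rightarrow> ineq list \<Rightarrow> ineq list" where
  "fm_elim N R =
     [r \<leftarrow> R. fst r N = 0] @ [fm_comb N p q. p \<leftarrow> R, 0 < fst p N, q \<leftarrow> R, fst q N < 0]"

lemma set_fm_elim:
  "r \<in> set (fm_elim N R) \<longleftrightarrow> r \<in> set R \<and> fst r N = 0 \<or>
     (\<exists>p\<in>set R. \<exists>q\<in>set R. 0 < fst p N \<and> fst q N < 0 \<and> r = fm_comb N p q)"
  by (auto simp: fm_elim_def)

lemma fm_comb_coord: "fst (fm_comb N p q) N = 0"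
  by (simp add: fm_comb_def ineq_add_def ineq_scale_def)

lemma ip_fm_comb:
  "ip N (fst (fm_comb N p q)) z = - fst q N * ip N (fst p) z + fst p N * ip N (fst q) z"
  unfolding fm_comb_def ineq_add_def ineq_scale_def fst_conv by (simp only: ip_add_left ip_scale_left)

lemma snd_fm_comb: "snd (fm_comb N p q) = - fst q N * snd p + fst p N * snd q"
  by (simp add: fm_comb_def ineq_add_def ineq_scale_def)

lemma fm_elim_subset_cone: "set (fm_elim N R) \<subseteq> ineq_cone R"
proof
  fix r assume "r \<in> set (fm_elim N R)"
  then consider "r \<in> set R"
    | p q where "p \<in> set R" "q \<in> set R" "0 < fst p N" "fst q N < 0" "r = fm_comb N p q"
    by (auto simp: set_fm_elim)
  then show "r \<in> ineq_cone R"
  proof cases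
    case 2
    then show ?thesis
      unfolding 2(5) fm_comb_def by (intro ineq_cone.add ineq_cone.scale ineq_cone.gen) auto
  qed (rule ineq_cone.gen)
qed

lemma fm_elim_coord: "r \<in> set (fm_elim N R) \<Longrightarrow> fst r N = 0"
  unfolding set_fm_elim by (metis fm_comb_coord)

lemma fm_elim_sound:
  assumes "satisfies (Suc N) R w"
  shows "satisfies N (fm_elim N R) w"
  unfolding satisfies_def
proof
  fix r assume r: "r \<in> set (fm_elim N R)"
  then have "ip (Suc N) (fst r) w \<le> snd r"
    using ineq_cone_valid[OF _ assms] fm_elim_subset_cone by blast
  then show "ip N (fst r) w \<le> snd r" using fm_elim_coord[OF r] by (simp add: ip_Suc)
qed

lemma finite_sets_separated:
  fixes L U :: "real set"
  assumes "finite L" "finite U" and "\<And>l u. l \<in> L \<Longrightarrow> u \<in> U \<Longrightarrow> l \<le> u"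
  obtains s where "\<And>l. l \<in> L \<Longrightarrow> l \<le> s" and "\<And>u. u \<in> U \<Longrightarrow> s \<le> u"
proof (cases "L = {}")
  case True
  show ?thesis
    by (rule that[of "if U = {} then 0 else Min U"]) (use True assms(2) in auto)
next
  case False
  show ?thesis
    by (rule that[of "Max L"]) (use False assms in auto)
qed

lemma fm_elim_complete:
  assumes z: "satisfies N (fm_elim N R) z"
  obtains s where "satisfies (Suc N) R (z(N := s))"
proof -
  define lo where "lo q = (ip N (fst q) z - snd q) / - fst q N" for q
  define up where "up p = (snd p - ip N (fst p) z) / fst p N" for p
  have lo_up: "lo q \<le> up p" if p: "p \<in> set R" "0 < fst p N" and q: "q \<in> set R" "fst q N < 0" for p q
  proof -
    have "fm_comb N p q \<in> set (fm_elim N R)" using p q by (auto simp: set_fm_elim)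
    then have "ip N (fst (fm_comb N p q)) z \<le> snd (fm_comb N p q)"
      using z by (simp add: satisfies_def)
    then have "- fst q N * ip N (fst p) z + fst p N * ip N (fst q) z \<le> - fst q N * snd p + fst p N * snd q"
      by (simp only: ip_fm_comb snd_fm_comb)
    then show ?thesis using p(2) q(2)
      unfolding lo_def up_def by (simp add: divide_simps algebra_simps)
  qed
  obtain s where lo: "\<And>q. q \<in> set R \<Longrightarrow> fst q N < 0 \<Longrightarrow> lo q \<le> s"
    and up: "\<And>p. p \<in> set R \<Longrightarrow> 0 < fst p N \<Longrightarrow> s \<le> up p"
  proof (rule finite_sets_separated[of "lo ` {q \<in> set R. fst q N < 0}" "up ` {p \<in> set R. 0 < fst p N}"])
    fix s
    assume "\<And>l. l \<in> lo ` {q \<in> set R. fst q N < 0} \<Longrightarrow> l \<le> s"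
      and "\<And>u. u \<in> up ` {p \<in> set R. 0 < fst p N} \<Longrightarrow> s \<le> u"
    then show thesis by (intro that) auto
  qed (auto intro: lo_up)
  have "ip N (fst r) z + fst r N * s \<le> snd r" if r: "r \<in> set R" for r
  proof (cases "fst r N" "0 :: real" rule: linorder_cases)
    case less
    then show ?thesis using lo[OF r less] unfolding lo_def by (simp add: divide_simps algebra_simps)
  next
    case equal
    then have "r \<in> set (fm_elim N R)" using r by (simp add: set_fm_elim)
    then show ?thesis using z equal by (simp add: satisfies_def)
  next
    case greater
    then show ?thesis using up[OF r greater] unfolding up_def by (simp add: divide_simps algebra_simps)
  qed
  then show ?thesis by (intro that[of s]) (simp add: satisfies_def ip_Suc)
qed

theorem farkas_infeasible:
  assumes "\<nexists>z. satisfies N R z"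
  shows "\<exists>e\<in>ineq_cone R. (\<forall>i<N. fst e i = 0) \<and> snd e < 0"
  using assms
proof (induction N arbitrary: R)
  case 0
  then obtain r where "r \<in> set R" "snd r < 0" by (auto simp: satisfies_def not_le)
  then show ?case by (auto intro: ineq_cone.gen)
next
  case (Suc N)
  then have "\<nexists>z. satisfies N (fm_elim N R) z" by (metis fm_elim_complete)
  then obtain e where e: "e \<in> ineq_cone (fm_elim N R)" "\<forall>i<N. fst e i = 0" "snd e < 0"
    using Suc.IH by blast
  have "fst e N = 0" by (rule ineq_cone_coord_zero[OF e(1)]) (use fm_elim_coord in blast)
  moreover have "e \<in> ineq_cone R" using e(1) ineq_cone_subset[OF fm_elim_subset_cone] by blast
  ultimately show ?case using e by (auto simp: less_Suc_eq)
qed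

fun fm_project :: "nat \<Rightarrow> nat \<Rightarrow> ineq list \<Rightarrow> ineq list" where
  "fm_project N 0 R = R"
| "fm_project N (Suc j) R = fm_project N j (fm_elim (N + j) R)"

lemma satisfies_fm_project:
  "satisfies N (fm_project N j R) z \<longleftrightarrow> (\<exists>v. (\<forall>i<N. v i = z i) \<and> satisfies (N + j) R v)"
proof (induction j arbitrary: R)
  case 0
  have "satisfies N R v \<longleftrightarrow> satisfies N R z" if "\<forall>i<N. v i = z i" for v
    using that by (intro satisfies_cong) auto
  then show ?case by (metis add_0_right fm_project.simps(1))
next
  case (Suc j)
  have "(\<exists>v. (\<forall>i<N. v i = z i) \<and> satisfies (N + j) (fm_elim (N + j) R) v) \<longleftrightarrow>
        (\<exists>v. (\<forall>i<N. v i = z i) \<and> satisfies (N + Suc j) R v)"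
  proof
    assume "\<exists>v. (\<forall>i<N. v i = z i) \<and> satisfies (N + j) (fm_elim (N + j) R) v"
    then obtain v where v: "\<forall>i<N. v i = z i" "satisfies (N + j) (fm_elim (N + j) R) v" by blast
    obtain s where "satisfies (Suc (N + j)) R (v(N + j := s))" using fm_elim_complete[OF v(2)] .
    moreover have "\<forall>i<N. (v(N + j := s)) i = z i" using v(1) by auto
    ultimately show "\<exists>v. (\<forall>i<N. v i = z i) \<and> satisfies (N + Suc j) R v" unfolding add_Suc_right by blast
  next
    assume "\<exists>v. (\<forall>i<N. v i = z i) \<and> satisfies (N + Suc j) R v"
    then show "\<exists>v. (\<forall>i<N. v i = z i) \<and> satisfies (N + j) (fm_elim (N + j) R) v"
      using fm_elim_sound by (metis add_Suc_right)
  qed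
  then show ?case using Suc.IH by simp
qed

definition homogenized_system :: "nat \<Rightarrow> ineq list \<Rightarrow> (nat \<Rightarrow> real) \<Rightarrow> real \<Rightarrow> ineq list" where
  "homogenized_system N R a \<beta> =
     map (\<lambda>r. ((fst r)(N := - snd r), 0)) R @
     [((\<lambda>i. if i = N then -1 else 0), 0), ((\<lambda>i. - a i)(N := \<beta>), -1)]"

lemma satisfies_homogenized_system:
  "satisfies (Suc N) (homogenized_system N R a \<beta>) w \<longleftrightarrow>
     (\<forall>r\<in>set R. ip N (fst r) w \<le> snd r * w N) \<and> 0 \<le> w N \<and> \<beta> * w N + 1 \<le> ip N a w"
proof -
  have "ip N (\<lambda>i. if i = N then -1 else 0) w = 0"
    unfolding ip_def by (rule sum.neutral) auto
  then show ?thesis by (auto simp: homogenized_system_def satisfies_def ip_Suc ip_uminus_left)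
qed

(* A solution with t > 0 rescales to a solution of R violating a z <= beta, one with t = 0 is a
   direction of recession along which a z increases without bound. *)
lemma homogenized_system_infeasible:
  assumes z0: "satisfies N R z0" and valid: "\<forall>z. satisfies N R z \<longrightarrow> ip N a z \<le> \<beta>"
    and rows: "\<And>r. r \<in> set R \<Longrightarrow> ip N (fst r) w \<le> snd r * t"
    and t: "0 \<le> t" and aw: "\<beta> * t + 1 \<le> ip N a w"
  shows False
proof (cases "t = 0")
  case True
  define s where "s = max 0 (\<beta> - ip N a z0) + 1"
  have "satisfies N R (\<lambda>i. z0 i + s * w i)"
    unfolding satisfies_def
  proof
    fix r assume r: "r \<in> set R"
    have "ip N (fst r) z0 \<le> snd r" using z0 r by (simp add: satisfies_def)
    moreover have "s * ip N (fst r) w \<le> 0"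
      using rows[OF r] True by (simp add: s_def mult_nonneg_nonpos)
    ultimately show "ip N (fst r) (\<lambda>i. z0 i + s * w i) \<le> snd r"
      by (simp add: ip_add_right ip_scale_right)
  qed
  then have "ip N a (\<lambda>i. z0 i + s * w i) \<le> \<beta>" using valid by blast
  then have "ip N a z0 + s * ip N a w \<le> \<beta>" by (simp add: ip_add_right ip_scale_right)
  moreover have "s * 1 \<le> s * ip N a w" using aw True by (intro mult_left_mono) (auto simp: s_def)
  ultimately show False by (simp add: s_def)
next
  case False
  with t have "0 < t" by simp
  have "satisfies N R (\<lambda>i. w i / t)"
    unfolding satisfies_def
  proof
    fix r assume "r \<in> set R"
    then show "ip N (fst r) (\<lambda>i. w i / t) \<le> snd r"
      using rows \<open>0 < t\<close> ip_scale_right[of N "fst r" "1 / t" w] by (simp add: pos_divide_le_eq)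
  qed
  then have "ip N a (\<lambda>i. w i / t) \<le> \<beta>" using valid by blast
  then show False
    using aw \<open>0 < t\<close> ip_scale_right[of N a "1 / t" w] by (simp add: pos_divide_le_eq)
qed

lemma ineq_cone_homogenized_system:
  assumes "e \<in> ineq_cone (homogenized_system N R a \<beta>)"
  obtains e' \<mu> \<nu> where "e' \<in> ineq_cone R" and "0 \<le> \<mu>" and "0 \<le> \<nu>"
    and "\<forall>i<N. fst e i = fst e' i - \<nu> * a i" and "fst e N = \<nu> * \<beta> - snd e' - \<mu>" and "snd e = - \<nu>"
proof -
  define h where "h r = ((fst r)(N := - snd r), 0 :: real)" for r :: ineq
  define t_row :: ineq where "t_row = ((\<lambda>i. if i = N then -1 else 0), 0)"
  define a_row :: ineq where "a_row = ((\<lambda>i. - a i)(N := \<beta>), -1)"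
  have "homogenized_system N R a \<beta> = map h R @ [t_row, a_row]"
    by (simp add: homogenized_system_def h_def t_row_def a_row_def)
  with assms obtain e1 e2 where e12: "e1 \<in> ineq_cone (map h R)" "e2 \<in> ineq_cone [t_row, a_row]"
    "e = ineq_add e1 e2"
    using ineq_cone_append by metis
  then obtain e3 e4 where e34: "e3 \<in> ineq_cone [t_row]" "e4 \<in> ineq_cone [a_row]" "e2 = ineq_add e3 e4"
    using ineq_cone_append[of e2 "[t_row]" "[a_row]"] by auto
  obtain \<mu> \<nu> where \<mu>\<nu>: "0 \<le> \<mu>" "e3 = ineq_scale \<mu> t_row" "0 \<le> \<nu>" "e4 = ineq_scale \<nu> a_row"
    using ineq_cone_single e34 by metis
  have "\<exists>e'\<in>ineq_cone R. e1 = h e'"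
    by (rule ineq_cone_map_linear[OF _ _ _ e12(1)])
      (auto simp: h_def ineq_add_def ineq_scale_def ineq_zero_def fun_eq_iff)
  then obtain e' where e': "e' \<in> ineq_cone R" "e1 = h e'" ..
  show thesis
    by (rule that[OF e'(1) \<mu>\<nu>(1,3)])
      (simp_all add: e12(3) e34(3) \<mu>\<nu>(2,4) e'(2) ineq_add_def ineq_scale_def h_def t_row_def a_row_def)
qed

theorem affine_farkas:
  assumes z0: "satisfies N R z0" and valid: "\<forall>z. satisfies N R z \<longrightarrow> ip N a z \<le> \<beta>"
  shows "\<exists>e\<in>ineq_cone R. (\<forall>i<N. fst e i = a i) \<and> snd e \<le> \<beta>"
proof -
  have "\<nexists>w. satisfies (Suc N) (homogenized_system N R a \<beta>) w"
    using homogenized_system_infeasible[OF z0 valid] by (auto simp: satisfies_homogenized_system)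
  then obtain e where e: "e \<in> ineq_cone (homogenized_system N R a \<beta>)" "\<forall>i<Suc N. fst e i = 0" "snd e < 0"
    using farkas_infeasible by blast
  obtain e' \<mu> \<nu> where e': "e' \<in> ineq_cone R" "0 \<le> \<mu>" "0 \<le> \<nu>"
    and coords: "\<forall>i<N. fst e i = fst e' i - \<nu> * a i" and "fst e N = \<nu> * \<beta> - snd e' - \<mu>"
    and "snd e = - \<nu>"
    using ineq_cone_homogenized_system[OF e(1)] .
  with e have "0 < \<nu>" "snd e' \<le> \<nu> * \<beta>" by auto
  show ?thesis
  proof (intro bexI[of _ "ineq_scale (1 / \<nu>) e'"] conjI allI impI)
    show "ineq_scale (1 / \<nu>) e' \<in> ineq_cone R" using e'(1) \<open>0 < \<nu>\<close> by (intro ineq_cone.scale) auto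
    show "fst (ineq_scale (1 / \<nu>) e') i = a i" if "i < N" for i
      using coords e(2) that \<open>0 < \<nu>\<close> by (simp add: ineq_scale_def)
    show "snd (ineq_scale (1 / \<nu>) e') \<le> \<beta>"
      using \<open>snd e' \<le> \<nu> * \<beta>\<close> \<open>0 < \<nu>\<close> by (simp add: ineq_scale_def field_simps)
  qed
qed

section \<open>Hoffman's error bound\<close>

definition violation :: "nat \<Rightarrow> ineq list \<Rightarrow> (nat \<Rightarrow> real) \<Rightarrow> real" where
  "violation N R z = (\<Sum>r\<leftarrow>R. max 0 (ip N (fst r) z - snd r))"

lemma violation_nonneg: "0 \<le> violation N R z"
  unfolding violation_def by (rule sum_list_nonneg) auto

lemma violation_ge: "r \<in> set R \<Longrightarrow> ip N (fst r) z - snd r \<le> violation N R z"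
proof (induction R)
  case (Cons s R)
  then show ?case using violation_nonneg[of N R z] by (auto simp: violation_def)
qed simp

lemma violation_le_length:
  "(\<And>r. r \<in> set R \<Longrightarrow> ip N (fst r) z - snd r \<le> B) \<Longrightarrow> 0 \<le> B \<Longrightarrow> violation N R z \<le> real (length R) * B"
proof -
  assume "\<And>r. r \<in> set R \<Longrightarrow> ip N (fst r) z - snd r \<le> B" "0 \<le> B"
  then have "violation N R z \<le> (\<Sum>r\<leftarrow>R. B)"
    unfolding violation_def by (intro sum_list_mono) auto
  then show ?thesis by (simp add: sum_list_triv)
qed

lemma ineq_cone_violation_bound:
  "e \<in> ineq_cone R \<Longrightarrow> \<exists>H\<ge>0. \<forall>z. ip N (fst e) z - snd e \<le> H * violation N R z"
proof (induction rule: ineq_cone.induct)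
  case zero
  show ?case by (intro exI[of _ 0]) (simp add: ineq_zero_def)
next
  case (gen r)
  then show ?case by (intro exI[of _ 1]) (simp add: violation_ge)
next
  case (add r s)
  then obtain H H' where H: "0 \<le> H" "\<forall>z. ip N (fst r) z - snd r \<le> H * violation N R z"
    and H': "0 \<le> H'" "\<forall>z. ip N (fst s) z - snd s \<le> H' * violation N R z" by blast
  show ?case
  proof (intro exI[of _ "H + H'"] conjI allI)
    fix z
    have "ip N (fst r) z - snd r + (ip N (fst s) z - snd s) \<le> H * violation N R z + H' * violation N R z"
      using H H' by (intro add_mono) auto
    then show "ip N (fst (ineq_add r s)) z - snd (ineq_add r s) \<le> (H + H') * violation N R z"
      by (simp add: ineq_add_def ip_add_left algebra_simps)
  qed (use H H' in simp)
next
  case (scale r t)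
  then obtain H where "0 \<le> H" "\<forall>z. ip N (fst r) z - snd r \<le> H * violation N R z" by blast
  then show ?case using scale.hyps(2)
    by (intro exI[of _ "t * H"])
      (auto simp: ineq_scale_def ip_scale_left mult.assoc simp flip: right_diff_distrib intro: mult_left_mono)
qed

lemma implied_ineq_violation_bound:
  assumes "satisfies K R z0" and "\<forall>z. satisfies K R z \<longrightarrow> ip K a z \<le> \<beta>"
  shows "\<exists>H\<ge>0. \<forall>z. ip K a z - \<beta> \<le> H * violation K R z"
proof -
  obtain e where e: "e \<in> ineq_cone R" "\<forall>i<K. fst e i = a i" "snd e \<le> \<beta>"
    using affine_farkas[OF assms] by blast
  obtain H where H: "0 \<le> H" "\<forall>z. ip K (fst e) z - snd e \<le> H * violation K R z"
    using ineq_cone_violation_bound[OF e(1)] by blast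
  have "ip K a z - \<beta> \<le> H * violation K R z" for z
  proof -
    have "ip K a z = ip K (fst e) z" by (rule ip_cong) (use e(2) in auto)
    then show ?thesis using H(2)[rule_format, of z] e(3) by linarith
  qed
  with H(1) show ?thesis by blast
qed

(* A row valid for the projected Hoffman system cannot have a positive t-coefficient g; with g = 0
   it holds everywhere, and with g < 0 it is a consequence of R, hence bounded by the violation. *)
lemma valid_ineq_threshold:
  assumes z0: "satisfies K R z0"
    and valid: "\<And>p z T. satisfies K R p \<Longrightarrow> \<forall>i<K. \<bar>z i - p i\<bar> \<le> T \<Longrightarrow> ip K a z + g * T \<le> \<beta>"
  shows "\<exists>H\<ge>0. \<forall>z T. H * violation K R z \<le> T \<longrightarrow> ip K a z + g * T \<le> \<beta>"
proof -
  have "g \<le> 0"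
  proof (rule ccontr)
    assume "\<not> g \<le> 0"
    define T where "T = max 0 ((\<beta> - ip K a z0) / g) + 1"
    have "ip K a z0 + g * T \<le> \<beta>" by (rule valid[OF z0]) (simp add: T_def)
    moreover have "(\<beta> - ip K a z0) / g < T" by (simp add: T_def)
    ultimately show False using \<open>\<not> g \<le> 0\<close> by (simp add: divide_less_eq mult.commute)
  qed
  show ?thesis
  proof (cases "g = 0")
    case True
    have "ip K a z \<le> \<beta>" for z
    proof -
      have "\<forall>i<K. \<bar>z i - z0 i\<bar> \<le> (\<Sum>j<K. \<bar>z j - z0 j\<bar>)"
        by (auto intro: member_le_sum)
      from valid[OF z0 this] show ?thesis using True by simp
    qed
    then show ?thesis using True by (intro exI[of _ 0]) simp
  next
    case False
    with \<open>g \<le> 0\<close> have "g < 0" by simp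
    have "\<forall>z. satisfies K R z \<longrightarrow> ip K a z \<le> \<beta>"
      using valid[of _ _ 0] by fastforce
    then obtain H where H: "0 \<le> H" and bound: "\<And>z. ip K a z - \<beta> \<le> H * violation K R z"
      using implied_ineq_violation_bound[OF z0] by blast
    show ?thesis
    proof (intro exI[of _ "H / - g"] conjI allI impI)
      show "0 \<le> H / - g" using H \<open>g < 0\<close> by (simp add: divide_nonneg_neg)
      fix z T assume "H / - g * violation K R z \<le> T"
      then have "H * violation K R z \<le> - g * T" using \<open>g < 0\<close> by (simp add: field_simps)
      then show "ip K a z + g * T \<le> \<beta>" using bound[of z] by simp
    qed
  qed
qed

lemma uniform_threshold:
  fixes V :: "'a \<Rightarrow> real"
  assumes "finite S" and "\<And>z. 0 \<le> V z" and "\<forall>r\<in>S. \<exists>H\<ge>0. \<forall>z T. H * V z \<le> T \<longrightarrow> P r z T"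
  shows "\<exists>H\<ge>0. \<forall>z T. H * V z \<le> T \<longrightarrow> (\<forall>r\<in>S. P r z T)"
proof -
  obtain h where h: "\<And>r. r \<in> S \<Longrightarrow> 0 \<le> h r \<and> (\<forall>z T. h r * V z \<le> T \<longrightarrow> P r z T)"
    using bchoice[OF assms(3)] by blast
  have mono: "h r * V z \<le> (\<Sum>s\<in>S. h s) * V z" if "r \<in> S" for r z
    using that h assms(1,2) by (intro mult_right_mono member_le_sum) auto
  show ?thesis
  proof (intro exI[of _ "\<Sum>s\<in>S. h s"] conjI allI impI ballI)
    show "0 \<le> (\<Sum>s\<in>S. h s)" using h by (simp add: sum_nonneg)
    fix z T r assume "(\<Sum>s\<in>S. h s) * V z \<le> T" "r \<in> S"
    then show "P r z T" using h mono[of r z] by (meson order_trans)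
  qed
qed

definition ineq_shift :: "nat \<Rightarrow> ineq \<Rightarrow> ineq" where
  "ineq_shift k r = ((\<lambda>i. if k \<le> i then fst r (i - k) else 0), snd r)"

lemma ip_ineq_shift: "ip (k + l) (fst (ineq_shift k r)) v = ip l (fst r) (\<lambda>i. v (k + i))"
  unfolding ip_def sum_lessThan_add by (simp add: ineq_shift_def)

lemma snd_ineq_shift [simp]: "snd (ineq_shift k r) = snd r"
  by (simp add: ineq_shift_def)

(* Coordinates of the lifted system: z in 0..<K, a bound t at K and a point p in K+1..<2K+1;
   the rows say that p solves R and that |z i - p i| <= t for all i < K. *)
definition hoffman_lift :: "nat \<Rightarrow> ineq list \<Rightarrow> ineq list" where
  "hoffman_lift K R =
     map (ineq_shift (Suc K)) R @
     map (\<lambda>i. ((\<lambda>j. (if j = i then 1 else 0) - (if j = K then 1 else 0) - (if j = Suc K + i then 1 else 0)), 0)) [0..<K] @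
     map (\<lambda>i. ((\<lambda>j. (if j = Suc K + i then 1 else 0) - (if j = K then 1 else 0) - (if j = i then 1 else 0)), 0)) [0..<K]"

lemma satisfies_hoffman_lift:
  "satisfies (Suc K + K) (hoffman_lift K R) v \<longleftrightarrow>
     satisfies K R (\<lambda>i. v (Suc K + i)) \<and> (\<forall>i<K. \<bar>v i - v (Suc K + i)\<bar> \<le> v K)"
proof -
  have "satisfies (Suc K + K) (map (ineq_shift (Suc K)) R) v \<longleftrightarrow> satisfies K R (\<lambda>i. v (Suc K + i))"
    by (simp only: satisfies_def set_map ball_simps ip_ineq_shift snd_ineq_shift)
  moreover have "ip (Suc K + K) (\<lambda>j. (if j = i then 1 else 0) - (if j = K then 1 else 0) - (if j = Suc K + i then 1 else 0)) v
      = v i - v K - v (Suc K + i)"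
    "ip (Suc K + K) (\<lambda>j. (if j = Suc K + i then 1 else 0) - (if j = K then 1 else 0) - (if j = i then 1 else 0)) v
      = v (Suc K + i) - v K - v i" if "i < K" for i
    using that by (simp_all add: ip_diff_left ip_unit_left)
  ultimately show ?thesis
    unfolding hoffman_lift_def satisfies_append satisfies_map_upt by (auto simp: abs_le_iff)
qed

lemma satisfies_hoffman_projection:
  "satisfies (Suc K) (fm_project (Suc K) K (hoffman_lift K R)) (z(K := T)) \<longleftrightarrow>
     (\<exists>p. satisfies K R p \<and> (\<forall>i<K. \<bar>z i - p i\<bar> \<le> T))"
  unfolding satisfies_fm_project satisfies_hoffman_lift
proof
  assume "\<exists>v. (\<forall>i<Suc K. v i = (z(K := T)) i) \<and>
    satisfies K R (\<lambda>i. v (Suc K + i)) \<and> (\<forall>i<K. \<bar>v i - v (Suc K + i)\<bar> \<le> v K)"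
  then obtain v where v: "\<forall>i<Suc K. v i = (z(K := T)) i" "satisfies K R (\<lambda>i. v (Suc K + i))"
    "\<forall>i<K. \<bar>v i - v (Suc K + i)\<bar> \<le> v K" by blast
  have "v K = T" "\<forall>i<K. v i = z i" using v(1) by auto
  with v(2,3) show "\<exists>p. satisfies K R p \<and> (\<forall>i<K. \<bar>z i - p i\<bar> \<le> T)" by auto
next
  assume "\<exists>p. satisfies K R p \<and> (\<forall>i<K. \<bar>z i - p i\<bar> \<le> T)"
  then obtain p where p: "satisfies K R p" "\<forall>i<K. \<bar>z i - p i\<bar> \<le> T" by blast
  define v where "v i = (if i < Suc K then (z(K := T)) i else p (i - Suc K))" for i
  have "(\<lambda>i. v (Suc K + i)) = p" by (simp add: v_def)
  with p show "\<exists>v. (\<forall>i<Suc K. v i = (z(K := T)) i) \<and>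
    satisfies K R (\<lambda>i. v (Suc K + i)) \<and> (\<forall>i<K. \<bar>v i - v (Suc K + i)\<bar> \<le> v K)"
    by (intro exI[of _ v]) (auto simp: v_def)
qed

theorem hoffman_bound:
  assumes z0: "satisfies K R z0"
  shows "\<exists>H\<ge>0. \<forall>z. \<exists>p. satisfies K R p \<and> (\<forall>i<K. \<bar>z i - p i\<bar> \<le> H * violation K R z)"
proof -
  define R' where "R' = fm_project (Suc K) K (hoffman_lift K R)"
  have "\<forall>r\<in>set R'. \<exists>H\<ge>0. \<forall>z T. H * violation K R z \<le> T \<longrightarrow> ip K (fst r) z + fst r K * T \<le> snd r"
  proof
    fix r assume "r \<in> set R'"
    show "\<exists>H\<ge>0. \<forall>z T. H * violation K R z \<le> T \<longrightarrow> ip K (fst r) z + fst r K * T \<le> snd r"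
    proof (rule valid_ineq_threshold[OF z0])
      fix p z T assume "satisfies K R p" "\<forall>i<K. \<bar>z i - p i\<bar> \<le> T"
      then have "satisfies (Suc K) R' (z(K := T))"
        unfolding R'_def satisfies_hoffman_projection by blast
      then show "ip K (fst r) z + fst r K * T \<le> snd r"
        using \<open>r \<in> set R'\<close> by (simp add: satisfies_def ip_Suc)
    qed
  qed
  from uniform_threshold[OF _ violation_nonneg this] obtain H where H: "0 \<le> H"
    "\<And>z T. H * violation K R z \<le> T \<Longrightarrow> \<forall>r\<in>set R'. ip K (fst r) z + fst r K * T \<le> snd r"
    by blast
  show ?thesis
  proof (intro exI[of _ H] conjI allI)
    fix z
    have "satisfies (Suc K) R' (z(K := H * violation K R z))"
      using H(2)[OF order_refl] by (simp add: satisfies_def ip_Suc)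
    then show "\<exists>p. satisfies K R p \<and> (\<forall>i<K. \<bar>z i - p i\<bar> \<le> H * violation K R z)"
      unfolding R'_def satisfies_hoffman_projection .
  qed (rule H(1))
qed

section \<open>The linear program\<close>

lemma mem_ncone_nonneg_first:
  assumes "k \<le> N"
  shows "w \<in> ncone N (nonneg_first N k) x \<longleftrightarrow>
    x \<in> nonneg_first N k \<and> w \<in> vecs N \<and> (\<forall>i<k. w i \<le> 0) \<and> (\<forall>i. k \<le> i \<and> i < N \<longrightarrow> w i = 0) \<and>
    ip N w x = 0"
    (is "_ \<longleftrightarrow> ?x \<and> ?w \<and> ?neg \<and> ?zero \<and> ?compl")
proof
  assume w: "w \<in> ncone N (nonneg_first N k) x"
  then have x: ?x and ?w and test: "\<And>z. z \<in> nonneg_first N k \<Longrightarrow> ip N w (\<lambda>i. z i - x i) \<le> 0"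
    unfolding ncone_def by (auto split: if_splits)
  have xv: "x \<in> vecs N" and xnn: "\<forall>i<k. 0 \<le> x i" using x by (auto simp: nonneg_first_def)
  have move: "w i * d \<le> 0" if "i < N" "x i + d \<ge> 0 \<or> k \<le> i" for i d
  proof -
    have "(\<lambda>j. x j + (if j = i then d else 0)) \<in> nonneg_first N k"
      using xv xnn that by (auto simp: nonneg_first_def vecs_def)
    from test[OF this] show ?thesis using ip_unit_right[OF \<open>i < N\<close>, of w d] by simp
  qed
  have "w i \<le> 0" if "i < N" for i using move[OF that, of 1] xnn by (cases "i < k") auto
  moreover have "- w i \<le> 0" if "k \<le> i" "i < N" for i using move[of i "-1"] that by simp
  ultimately have ?neg ?zero using \<open>k \<le> N\<close> by (auto intro: antisym)
  have "(\<lambda>_. 0) \<in> nonneg_first N k" "(\<lambda>i. 2 * x i) \<in> nonneg_first N k"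
    using xv xnn by (auto simp: nonneg_first_def vecs_def)
  from test[OF this(1)] test[OF this(2)] have ?compl
    by (simp add: ip_diff_right ip_scale_right ip_uminus_right)
  show "?x \<and> ?w \<and> ?neg \<and> ?zero \<and> ?compl" using x \<open>?w\<close> \<open>?neg\<close> \<open>?zero\<close> \<open>?compl\<close> by blast
next
  assume "?x \<and> ?w \<and> ?neg \<and> ?zero \<and> ?compl"
  then have x: ?x and w: ?w ?neg ?zero ?compl by blast+
  have "ip N w (\<lambda>i. z i - x i) \<le> 0" if z: "z \<in> nonneg_first N k" for z
  proof -
    have "ip N w z \<le> 0"
      unfolding ip_def
    proof (rule sum_nonpos)
      fix i assume "i \<in> {..<N}"
      then show "w i * z i \<le> 0" using w(2,3) z
        by (cases "i < k") (auto simp: nonneg_first_def mult_nonpos_nonneg)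
    qed
    then show ?thesis using w(4) by (simp add: ip_diff_right)
  qed
  then show "w \<in> ncone N (nonneg_first N k) x" using x w(1) unfolding ncone_def by auto
qed

lemma projm_diff_ncone_le:
  assumes "k \<le> N" and "w \<in> ncone N (nonneg_first N k) x" and "i < N"
  shows "\<bar>projm k (\<lambda>j. v j - w j) i\<bar> \<le> \<bar>v i\<bar>"
  using assms unfolding mem_ncone_nonneg_first[OF assms(1)] by (auto simp: projm_def)

lemma projp_diff_ncone_le:
  assumes "k \<le> N" and "w \<in> ncone N (nonneg_first N k) x" and "i < N"
  shows "\<bar>projp k (\<lambda>j. w j - u j) i\<bar> \<le> \<bar>u i\<bar>"
  using assms unfolding mem_ncone_nonneg_first[OF assms(1)] by (auto simp: projp_def)

lemma ip_tmulv_mulv: "ip n (tmulv m n A y) x = ip m (mulv m n A x) y"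
proof -
  have "ip n (tmulv m n A y) x = (\<Sum>j<n. \<Sum>i<m. A i j * y i * x j)"
    unfolding ip_def tmulv_def by (simp add: sum_distrib_right)
  also have "\<dots> = (\<Sum>i<m. \<Sum>j<n. A i j * x j * y i)"
    by (subst sum.swap) (simp add: algebra_simps)
  also have "\<dots> = ip m (mulv m n A x) y"
    unfolding ip_def mulv_def by (simp add: sum_distrib_right)
  finally show ?thesis .
qed

lemma duality_gap_split:
  "ip n c x + ip m b y = ip n (\<lambda>j. tmulv m n A y j + c j) x + ip m (\<lambda>i. b i - mulv m n A x i) y"
  by (simp add: ip_add_left ip_diff_left ip_tmulv_mulv)

lemma ip_col: "j < n \<Longrightarrow> ip m (\<lambda>i. A i j) y = tmulv m n A y j"
  by (simp add: ip_def tmulv_def)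

lemma ip_row: "i < m \<Longrightarrow> ip n (\<lambda>j. A i j) x = mulv m n A x i"
  by (simp add: ip_def mulv_def)

lemma residual_nonneg: "0 \<le> residual n m mI nb A b c x y"
  by (simp add: residual_def)

lemma gap_le_residual: "\<bar>ip n c x + ip m b y\<bar> \<le> residual n m mI nb A b c x y"
proof -
  have "sqrt ((ip n c x + ip m b y)\<^sup>2) \<le> residual n m mI nb A b c x y"
    unfolding residual_def by (rule real_sqrt_le_mono) simp
  then show ?thesis by simp
qed

lemma projm_le_residual:
  assumes "j < n"
  shows "\<bar>projm nb (\<lambda>i. tmulv m n A y i + c i) j\<bar> \<le> residual n m mI nb A b c x y"
proof -
  let ?v = "projm nb (\<lambda>i. tmulv m n A y i + c i)"
  have "sqrt ((nrm n ?v)\<^sup>2) \<le> residual n m mI nb A b c x y"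
    unfolding residual_def by (rule real_sqrt_le_mono) simp
  then show ?thesis using abs_le_nrm[OF assms, of ?v] nrm_nonneg[of n ?v] by simp
qed

lemma projp_le_residual:
  assumes "i < m"
  shows "\<bar>projp mI (\<lambda>i. mulv m n A x i - b i) i\<bar> \<le> residual n m mI nb A b c x y"
proof -
  let ?v = "projp mI (\<lambda>i. mulv m n A x i - b i)"
  have "sqrt ((nrm m ?v)\<^sup>2) \<le> residual n m mI nb A b c x y"
    unfolding residual_def by (rule real_sqrt_le_mono) simp
  then show ?thesis using abs_le_nrm[OF assms, of ?v] nrm_nonneg[of m ?v] by simp
qed

lemma dist_Omega_le:
  assumes "(x', y') \<in> Omega n m mI nb A b c"
  shows "dist_Omega n m mI nb A b c x y \<le> pnrm n m (\<lambda>i. x i - x' i) (\<lambda>i. y i - y' i)"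
  unfolding dist_Omega_def
  by (rule cInf_lower) (use assms in \<open>auto intro!: bdd_belowI[of _ 0] simp: pnrm_def\<close>)

locale lp_data =
  fixes n m mI nb :: nat and A :: "nat \<Rightarrow> nat \<Rightarrow> real" and b c :: "nat \<Rightarrow> real"
  assumes nb_le: "nb \<le> n" and mI_le: "mI \<le> m" and c_vec: "c \<in> vecs n" and b_vec: "b \<in> vecs m"
begin

abbreviation res :: "(nat \<Rightarrow> real) \<Rightarrow> (nat \<Rightarrow> real) \<Rightarrow> real" where
  "res x y \<equiv> residual n m mI nb A b c x y"

definition primal_feasible :: "(nat \<Rightarrow> real) \<Rightarrow> bool" where
  "primal_feasible x \<longleftrightarrow> (\<forall>j<nb. 0 \<le> x j) \<and>
     (\<forall>i<m. mulv m n A x i \<le> b i) \<and> (\<forall>i. mI \<le> i \<and> i < m \<longrightarrow> b i \<le> mulv m n A x i)"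

definition dual_feasible :: "(nat \<Rightarrow> real) \<Rightarrow> bool" where
  "dual_feasible y \<longleftrightarrow> (\<forall>i<mI. 0 \<le> y i) \<and>
     (\<forall>j<n. 0 \<le> tmulv m n A y j + c j) \<and> (\<forall>j. nb \<le> j \<and> j < n \<longrightarrow> tmulv m n A y j + c j \<le> 0)"

definition pd_optimal :: "(nat \<Rightarrow> real) \<Rightarrow> (nat \<Rightarrow> real) \<Rightarrow> bool" where
  "pd_optimal x y \<longleftrightarrow> primal_feasible x \<and> dual_feasible y \<and> ip n c x + ip m b y = 0"

lemma gap_parts_nonneg:
  assumes "primal_feasible x" and "dual_feasible y"
  shows "0 \<le> ip n (\<lambda>j. tmulv m n A y j + c j) x" and "0 \<le> ip m (\<lambda>i. b i - mulv m n A x i) y"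
  unfolding ip_def
proof (rule_tac [!] sum_nonneg)
  fix j assume "j \<in> {..<n}"
  then have "0 \<le> tmulv m n A y j + c j" "\<not> j < nb \<Longrightarrow> tmulv m n A y j + c j \<le> 0"
    using assms(2) by (auto simp: dual_feasible_def)
  then show "0 \<le> (tmulv m n A y j + c j) * x j"
    using assms(1) by (cases "j < nb") (auto simp: primal_feasible_def)
next
  fix i assume "i \<in> {..<m}"
  then have "0 \<le> b i - mulv m n A x i" "\<not> i < mI \<Longrightarrow> b i - mulv m n A x i \<le> 0"
    using assms(1) by (auto simp: primal_feasible_def)
  then show "0 \<le> (b i - mulv m n A x i) * y i"
    using assms(2) by (cases "i < mI") (auto simp: dual_feasible_def)
qed

lemma complementary_slackness:
  assumes "pd_optimal x y"
  shows "ip n (\<lambda>j. tmulv m n A y j + c j) x = 0" and "ip m (\<lambda>i. b i - mulv m n A x i) y = 0"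
  using gap_parts_nonneg[of x y] duality_gap_split[of n c x m b y A] assms
  unfolding pd_optimal_def by linarith+

lemma pd_optimal_in_Omega:
  assumes "x \<in> vecs n" and "y \<in> vecs m" and opt: "pd_optimal x y"
  shows "(x, y) \<in> Omega n m mI nb A b c"
proof -
  have "\<forall>j<nb. 0 \<le> x j" "\<forall>i<mI. 0 \<le> y i"
    and "\<forall>j<nb. 0 \<le> tmulv m n A y j + c j" "\<forall>i<mI. mulv m n A x i \<le> b i"
    and "\<forall>j. nb \<le> j \<and> j < n \<longrightarrow> tmulv m n A y j + c j = 0"
    and "\<forall>i. mI \<le> i \<and> i < m \<longrightarrow> mulv m n A x i = b i"
    using opt nb_le mI_le unfolding pd_optimal_def primal_feasible_def dual_feasible_def
    by (auto intro: order.antisym)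
  moreover have "\<forall>j\<ge>n. tmulv m n A y j = 0" "\<forall>i\<ge>m. mulv m n A x i = 0"
    by (simp_all add: tmulv_def mulv_def)
  ultimately have "(\<lambda>j. - (tmulv m n A y j + c j)) \<in> ncone n (nonneg_first n nb) x"
    and "(\<lambda>i. mulv m n A x i - b i) \<in> ncone m (nonneg_first m mI) y"
    unfolding mem_ncone_nonneg_first[OF nb_le] mem_ncone_nonneg_first[OF mI_le]
    using assms(1,2) c_vec b_vec complementary_slackness[OF opt]
      ip_uminus_left[of n "\<lambda>j. tmulv m n A y j + c j" x]
      ip_uminus_left[of m "\<lambda>i. b i - mulv m n A x i" y]
    by (auto simp: nonneg_first_def vecs_def)
  then show ?thesis
    using assms(1,2) unfolding Omega_def Tl_def by (force simp: vecs_def)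
qed

lemma lp_feasible_iff: "lp_feasible n m mI nb A b x \<longleftrightarrow> x \<in> vecs n \<and> primal_feasible x"
proof -
  let ?Ax = "mulv m n A x"
  have "(\<forall>i<m. ?Ax i \<le> b i) \<and> (\<forall>i. mI \<le> i \<and> i < m \<longrightarrow> b i \<le> ?Ax i) \<longleftrightarrow>
      (\<forall>i<mI. ?Ax i \<le> b i) \<and> (\<forall>i. mI \<le> i \<and> i < m \<longrightarrow> ?Ax i = b i)" (is "?L \<longleftrightarrow> ?R")
  proof
    assume ?L
    then show ?R using mI_le by (auto intro: order.antisym)
  next
    assume ?R
    show ?L
    proof (intro conjI allI impI)
      show "?Ax i \<le> b i" if "i < m" for i using \<open>?R\<close> that by (cases "i < mI") auto
      show "b i \<le> ?Ax i" if "mI \<le> i \<and> i < m" for i using \<open>?R\<close> that by auto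
    qed
  qed
  then show ?thesis unfolding lp_feasible_def primal_feasible_def by blast
qed

lemma primal_feasible_cong: "(\<And>j. j < n \<Longrightarrow> x j = x' j) \<Longrightarrow> primal_feasible x \<longleftrightarrow> primal_feasible x'"
proof -
  assume eq: "\<And>j. j < n \<Longrightarrow> x j = x' j"
  then have "mulv m n A x = mulv m n A x'" by (simp add: mulv_def fun_eq_iff)
  with eq nb_le show ?thesis by (simp add: primal_feasible_def)
qed

definition primal_system :: "ineq list" where
  "primal_system =
     map (\<lambda>i. ((\<lambda>j. A i j), b i)) [0..<m] @ map (\<lambda>i. ((\<lambda>j. - A i j), - b i)) [mI..<m] @
     map (\<lambda>j. ((\<lambda>k. if k = j then -1 else 0), 0)) [0..<nb]"

lemma satisfies_primal_system: "satisfies n primal_system x \<longleftrightarrow> primal_feasible x"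
proof -
  have "ip n (\<lambda>j. - A i j) x = - mulv m n A x i" if "i < m" for i
    using that by (simp add: ip_uminus_left ip_row)
  then show ?thesis
    using nb_le by (auto simp: primal_system_def primal_feasible_def ip_row ip_unit_left)
qed

lemma primal_system_cone_coeffs:
  assumes "e \<in> ineq_cone primal_system"
  obtains u1 u2 u3 where "\<forall>i. 0 \<le> u1 i" and "\<forall>i. 0 \<le> u2 i" and "\<forall>i. 0 \<le> u3 i"
    and "fst e = (\<lambda>j. (\<Sum>i<m. u1 i * A i j) + (\<Sum>i\<in>{mI..<m}. u2 i * - A i j) +
      (if j < nb then - u3 j else 0))"
    and "snd e = (\<Sum>i<m. u1 i * b i) + (\<Sum>i\<in>{mI..<m}. u2 i * - b i)"
proof -
  obtain e1 e23 where e1: "e1 \<in> ineq_cone (map (\<lambda>i. ((\<lambda>j. A i j), b i)) [0..<m])"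
    and e23: "e23 \<in> ineq_cone (map (\<lambda>i. ((\<lambda>j. - A i j), - b i)) [mI..<m] @
      map (\<lambda>j. ((\<lambda>k. if k = j then -1 else 0), 0)) [0..<nb])"
    and "e = ineq_add e1 e23"
    using ineq_cone_append[of e] assms unfolding primal_system_def by blast
  moreover obtain e2 e3 where e2: "e2 \<in> ineq_cone (map (\<lambda>i. ((\<lambda>j. - A i j), - b i)) [mI..<m])"
    and e3: "e3 \<in> ineq_cone (map (\<lambda>j. ((\<lambda>k. if k = j then -1 else 0), 0)) [0..<nb])"
    and "e23 = ineq_add e2 e3"
    using ineq_cone_append[OF e23] by blast
  ultimately have e: "e = ineq_add e1 (ineq_add e2 e3)" by simp
  obtain u1 u2 u3 where u: "\<forall>i. 0 \<le> u1 i" "\<forall>i. 0 \<le> u2 i" "\<forall>i. 0 \<le> u3 i"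
    and e1_eq: "e1 = ((\<lambda>j. \<Sum>i<m. u1 i * A i j), \<Sum>i<m. u1 i * b i)"
    and e2_eq: "e2 = ((\<lambda>j. \<Sum>i\<in>{mI..<m}. u2 i * - A i j), \<Sum>i\<in>{mI..<m}. u2 i * - b i)"
    and e3_eq: "e3 = ((\<lambda>j. \<Sum>i\<in>{0..<nb}. u3 i * (if j = i then -1 else 0)), 0)"
    using ineq_cone_map_coeffs[OF e1] ineq_cone_map_coeffs[OF e2] ineq_cone_map_coeffs[OF e3]
    by (auto simp: atLeast0LessThan)
  have "fst e3 j = (\<Sum>i\<in>{0..<nb}. if i = j then - u3 j else 0)" for j
    unfolding e3_eq fst_conv by (rule sum.cong) auto
  then have "fst e3 = (\<lambda>j. if j < nb then - u3 j else 0)" by (simp add: fun_eq_iff)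
  moreover have "snd e3 = 0" by (simp add: e3_eq)
  ultimately show thesis
    using u by (intro that) (simp_all add: e ineq_add_def e1_eq e2_eq add.assoc)
qed

lemma dual_from_certificate:
  assumes "e \<in> ineq_cone primal_system" and "\<forall>j<n. fst e j = - c j"
  obtains y where "y \<in> vecs m" and "dual_feasible y" and "ip m b y = snd e"
proof -
  obtain u1 u2 u3 where u: "\<forall>i. 0 \<le> u1 i" "\<forall>i. 0 \<le> u2 i" "\<forall>i. 0 \<le> u3 i"
    and fst_e: "fst e = (\<lambda>j. (\<Sum>i<m. u1 i * A i j) + (\<Sum>i\<in>{mI..<m}. u2 i * - A i j) +
      (if j < nb then - u3 j else 0))"
    and snd_e: "snd e = (\<Sum>i<m. u1 i * b i) + (\<Sum>i\<in>{mI..<m}. u2 i * - b i)"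
    using primal_system_cone_coeffs[OF assms(1)] .
  define y where "y i = (if i < m then u1 i - (if mI \<le> i then u2 i else 0) else 0)" for i
  have y_comb: "(\<Sum>i<m. u1 i * g i) + (\<Sum>i<m. (if mI \<le> i then u2 i else 0) * - g i) = (\<Sum>i<m. g i * y i)"
    for g
    unfolding sum.distrib[symmetric] by (rule sum.cong) (auto simp: y_def algebra_simps)
  have dual: "tmulv m n A y j + c j = (if j < nb then u3 j else 0)" if "j < n" for j
  proof -
    have "tmulv m n A y j = (\<Sum>i<m. u1 i * A i j) + (\<Sum>i\<in>{mI..<m}. u2 i * - A i j)"
      unfolding sum_atLeastLessThan_mult y_comb using that by (simp add: tmulv_def)
    then show ?thesis using assms(2)[rule_format, OF that] by (cases "j < nb") (simp_all add: fst_e)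
  qed
  show thesis
  proof
    show "y \<in> vecs m" by (simp add: vecs_def y_def)
    show "dual_feasible y"
      unfolding dual_feasible_def using dual u mI_le by (auto simp: y_def)
    show "ip m b y = snd e"
      unfolding snd_e sum_atLeastLessThan_mult y_comb by (simp add: ip_def mult.commute)
  qed
qed

lemma pd_optimal_exists:
  assumes "lp_has_optimal n m mI nb A b c"
  obtains x y where "x \<in> vecs n" and "y \<in> vecs m" and "pd_optimal x y"
proof -
  obtain xs where xs: "xs \<in> vecs n" "primal_feasible xs"
    and opt: "\<And>z. z \<in> vecs n \<Longrightarrow> primal_feasible z \<Longrightarrow> ip n c xs \<le> ip n c z"
    using assms by (auto simp: lp_has_optimal_def lp_feasible_iff)
  have "\<forall>z. satisfies n primal_system z \<longrightarrow> ip n (\<lambda>j. - c j) z \<le> - ip n c xs"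
  proof (intro allI impI)
    fix z assume "satisfies n primal_system z"
    define z' where "z' j = (if j < n then z j else 0)" for j
    have "primal_feasible z'"
      using \<open>satisfies n primal_system z\<close> primal_feasible_cong[of z' z]
      by (simp add: satisfies_primal_system z'_def)
    then have "ip n c xs \<le> ip n c z'" using opt by (simp add: vecs_def z'_def)
    also have "ip n c z' = ip n c z" by (rule ip_cong) (simp_all add: z'_def)
    finally show "ip n (\<lambda>j. - c j) z \<le> - ip n c xs" by (simp add: ip_uminus_left)
  qed
  with xs(2) obtain e where e: "e \<in> ineq_cone primal_system" "\<forall>j<n. fst e j = - c j" "snd e \<le> - ip n c xs"
    using affine_farkas satisfies_primal_system by blast
  obtain y where y: "y \<in> vecs m" "dual_feasible y" "ip m b y = snd e"
    using dual_from_certificate[OF e(1,2)] .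
  have "0 \<le> ip n c xs + ip m b y"
    using gap_parts_nonneg[OF xs(2) y(2)] duality_gap_split[of n c xs m b y A] by linarith
  with e(3) y have "pd_optimal xs y" using xs(2) by (simp add: pd_optimal_def)
  with xs(1) y(1) show thesis by (rule that)
qed

definition Omega_system :: "ineq list" where
  "Omega_system =
     [(join n c b, 0), (join n (\<lambda>j. - c j) (\<lambda>i. - b i), 0)] @
     map (\<lambda>j. (join n (\<lambda>k. if k = j then -1 else 0) (\<lambda>_. 0), 0)) [0..<nb] @
     map (\<lambda>i. (join n (\<lambda>_. 0) (\<lambda>k. if k = i then -1 else 0), 0)) [0..<mI] @
     map (\<lambda>j. (join n (\<lambda>_. 0) (\<lambda>i. - A i j), c j)) [0..<n] @
     map (\<lambda>j. (join n (\<lambda>_. 0) (\<lambda>i. A i j), - c j)) [nb..<n] @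
     map (\<lambda>i. (join n (\<lambda>j. A i j) (\<lambda>_. 0), b i)) [0..<m] @
     map (\<lambda>i. (join n (\<lambda>j. - A i j) (\<lambda>_. 0), - b i)) [mI..<m]"

lemma Omega_system_values:
  "ip (n + m) (join n c b) (join n x y) = ip n c x + ip m b y"
  "ip (n + m) (join n (\<lambda>j. - c j) (\<lambda>i. - b i)) (join n x y) = - (ip n c x + ip m b y)"
  "j < n \<Longrightarrow> ip (n + m) (join n (\<lambda>k. if k = j then -1 else 0) (\<lambda>_. 0)) (join n x y) = - x j"
  "i < m \<Longrightarrow> ip (n + m) (join n (\<lambda>_. 0) (\<lambda>k. if k = i then -1 else 0)) (join n x y) = - y i"
  "j < n \<Longrightarrow> ip (n + m) (join n (\<lambda>_. 0) (\<lambda>i. - A i j)) (join n x y) = - tmulv m n A y j"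
  "j < n \<Longrightarrow> ip (n + m) (join n (\<lambda>_. 0) (\<lambda>i. A i j)) (join n x y) = tmulv m n A y j"
  "i < m \<Longrightarrow> ip (n + m) (join n (\<lambda>j. A i j) (\<lambda>_. 0)) (join n x y) = mulv m n A x i"
  "i < m \<Longrightarrow> ip (n + m) (join n (\<lambda>j. - A i j) (\<lambda>_. 0)) (join n x y) = - mulv m n A x i"
  by (simp_all add: ip_join ip_uminus_left ip_unit_left ip_col ip_row)

lemma satisfies_Omega_system: "satisfies (n + m) Omega_system (join n x y) \<longleftrightarrow> pd_optimal x y"
  using nb_le mI_le
  by (auto simp: Omega_system_def Omega_system_values pd_optimal_def primal_feasible_def
      dual_feasible_def)

lemma violation_Omega_system_le:
  assumes "\<forall>j<nb. 0 \<le> x j" and "\<forall>i<mI. 0 \<le> y i"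
  shows "violation (n + m) Omega_system (join n x y) \<le> real (length Omega_system) * res x y"
proof (rule violation_le_length)
  have dual: "- (tmulv m n A y j + c j) \<le> res x y" "nb \<le> j \<Longrightarrow> tmulv m n A y j + c j \<le> res x y"
    if "j < n" for j
    using projm_le_residual[OF that, where nb = nb and m = m and A = A and y = y and c = c
        and mI = mI and b = b and x = x]
    by (auto simp: projm_def split: if_splits)
  have primal: "mulv m n A x i - b i \<le> res x y" "mI \<le> i \<Longrightarrow> b i - mulv m n A x i \<le> res x y"
    if "i < m" for i
    using projp_le_residual[OF that, where nb = nb and n = n and A = A and y = y and c = c
        and mI = mI and b = b and x = x]
    by (auto simp: projp_def split: if_splits)
  have gap: "\<bar>ip n c x + ip m b y\<bar> \<le> res x y" by (rule gap_le_residual)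
  have "0 \<le> res x y" by (rule residual_nonneg)
  with assms have signs: "\<forall>j\<in>{0..<nb}. - x j \<le> res x y" "\<forall>i\<in>{0..<mI}. - y i \<le> res x y"
    by auto
  have "\<forall>r\<in>set Omega_system. ip (n + m) (fst r) (join n x y) - snd r \<le> res x y"
    using nb_le mI_le gap signs dual primal
    by (simp add: Omega_system_def Omega_system_values ball_Un abs_le_iff)
  then show "ip (n + m) (fst r) (join n x y) - snd r \<le> res x y" if "r \<in> set Omega_system" for r
    using that by blast
qed (rule residual_nonneg)

lemma dist_Omega_le_sqrt_dim:
  assumes "satisfies (n + m) Omega_system p" and "\<forall>i<n + m. \<bar>join n x y i - p i\<bar> \<le> D"
    and "0 \<le> D"
  shows "dist_Omega n m mI nb A b c x y \<le> sqrt (real (n + m)) * D"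
proof -
  define x' where "x' i = (if i < n then p i else 0)" for i
  define y' where "y' i = (if i < m then p (n + i) else 0)" for i
  have "satisfies (n + m) Omega_system (join n x' y') = satisfies (n + m) Omega_system p"
    by (rule satisfies_cong) (auto simp: join_def x'_def y'_def)
  with assms(1) have "pd_optimal x' y'" by (simp add: satisfies_Omega_system)
  moreover have "x' \<in> vecs n" "y' \<in> vecs m" by (simp_all add: vecs_def x'_def y'_def)
  ultimately have "(x', y') \<in> Omega n m mI nb A b c" by (intro pd_optimal_in_Omega)
  then have "dist_Omega n m mI nb A b c x y \<le> pnrm n m (\<lambda>i. x i - x' i) (\<lambda>i. y i - y' i)"
    by (rule dist_Omega_le)
  also have "\<dots> \<le> sqrt (real (n + m)) * D"
  proof (rule pnrm_le_sqrt_dim[OF _ _ assms(3)])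
    show "\<forall>i<n. \<bar>x i - x' i\<bar> \<le> D"
    proof (intro allI impI)
      fix i assume "i < n"
      then show "\<bar>x i - x' i\<bar> \<le> D" using assms(2)[rule_format, of i] by (simp add: join_def x'_def)
    qed
    show "\<forall>i<m. \<bar>y i - y' i\<bar> \<le> D"
    proof (intro allI impI)
      fix i assume "i < m"
      then show "\<bar>y i - y' i\<bar> \<le> D" using assms(2)[rule_format, of "n + i"] by (simp add: join_def y'_def)
    qed
  qed
  finally show ?thesis .
qed

lemma Omega_error_bound:
  assumes "pd_optimal x0 y0"
  shows "\<exists>t\<ge>0. \<forall>x y. x \<in> nonneg_first n nb \<and> y \<in> nonneg_first m mI \<longrightarrow>
           dist_Omega n m mI nb A b c x y \<le> t * res x y"
proof -
  have "satisfies (n + m) Omega_system (join n x0 y0)" using assms by (simp add: satisfies_Omega_system)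
  then obtain H where H: "0 \<le> H" and near: "\<forall>z. \<exists>p. satisfies (n + m) Omega_system p \<and>
      (\<forall>i<n + m. \<bar>z i - p i\<bar> \<le> H * violation (n + m) Omega_system z)"
    using hoffman_bound by blast
  define L where "L = real (length Omega_system)"
  show ?thesis
  proof (intro exI[of _ "sqrt (real (n + m)) * (H * L)"] conjI allI impI)
    show "0 \<le> sqrt (real (n + m)) * (H * L)" using H by (simp add: L_def)
    fix x y assume "x \<in> nonneg_first n nb \<and> y \<in> nonneg_first m mI"
    then have signs: "\<forall>j<nb. 0 \<le> x j" "\<forall>i<mI. 0 \<le> y i" by (auto simp: nonneg_first_def)
    define D where "D = H * violation (n + m) Omega_system (join n x y)"
    obtain p where "satisfies (n + m) Omega_system p" "\<forall>i<n + m. \<bar>join n x y i - p i\<bar> \<le> D"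
      using near unfolding D_def by blast
    then have "dist_Omega n m mI nb A b c x y \<le> sqrt (real (n + m)) * D"
      by (rule dist_Omega_le_sqrt_dim) (simp add: D_def H violation_nonneg)
    also have "\<dots> \<le> sqrt (real (n + m)) * (H * (L * res x y))"
      unfolding D_def L_def
      by (intro mult_left_mono[OF mult_left_mono[OF violation_Omega_system_le[OF signs] H]]) simp
    finally show "dist_Omega n m mI nb A b c x y \<le> sqrt (real (n + m)) * (H * L) * res x y"
      by (simp only: mult.assoc)
  qed
qed

lemma residual_le_Tl:
  assumes "(v, u) \<in> Tl n m mI nb A b c x y"
  shows "res x y \<le> sqrt ((pnrm n m x y)\<^sup>2 + 1) * pnrm n m v u"
proof -
  obtain w w' where w: "w \<in> ncone n (nonneg_first n nb) x" "v = (\<lambda>i. c i + tmulv m n A y i + w i)"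
    and w': "w' \<in> ncone m (nonneg_first m mI) y" "u = (\<lambda>i. b i - mulv m n A x i + w' i)"
    using assms unfolding Tl_def by blast
  have "ip n w x = 0" "ip m w' y = 0"
    using w(1) w'(1) by (simp_all add: mem_ncone_nonneg_first nb_le mI_le)
  then have gap: "ip n c x + ip m b y = ip n v x + ip m u y"
    unfolding w(2) w'(2) by (simp add: ip_add_left ip_diff_left ip_tmulv_mulv)
  have "nrm n (projm nb (\<lambda>i. tmulv m n A y i + c i)) \<le> nrm n v"
    using projm_diff_ncone_le[OF nb_le w(1), of _ v] by (intro nrm_le_nrm) (simp add: w(2) add.commute)
  moreover have "nrm m (projp mI (\<lambda>i. mulv m n A x i - b i)) \<le> nrm m u"
    using projp_diff_ncone_le[OF mI_le w'(1), of _ u] by (intro nrm_le_nrm) (simp add: w'(2))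
  ultimately have "(nrm n (projm nb (\<lambda>i. tmulv m n A y i + c i)))\<^sup>2 + (nrm m (projp mI (\<lambda>i. mulv m n A x i - b i)))\<^sup>2
      \<le> (pnrm n m v u)\<^sup>2"
    unfolding pnrm_def by (simp add: add_mono power_mono nrm_nonneg)
  moreover have "(ip n c x + ip m b y)\<^sup>2 \<le> (pnrm n m v u)\<^sup>2 * (pnrm n m x y)\<^sup>2"
    unfolding gap by (rule ip_join_le_pnrm)
  ultimately have "res x y \<le> sqrt (((pnrm n m x y)\<^sup>2 + 1) * (pnrm n m v u)\<^sup>2)"
    unfolding residual_def by (intro real_sqrt_le_mono) (simp add: algebra_simps)
  also have "\<dots> = sqrt ((pnrm n m x y)\<^sup>2 + 1) * pnrm n m v u"
    by (simp add: real_sqrt_mult pnrm_def)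
  finally show ?thesis .
qed

lemma affine_part_mem_Tl:
  assumes "x \<in> nonneg_first n nb" and "y \<in> nonneg_first m mI"
  shows "((\<lambda>i. c i + tmulv m n A y i), (\<lambda>i. b i - mulv m n A x i)) \<in> Tl n m mI nb A b c x y"
proof -
  have "(\<lambda>_. 0) \<in> ncone n (nonneg_first n nb) x" "(\<lambda>_. 0) \<in> ncone m (nonneg_first m mI) y"
    using assms by (simp_all add: mem_ncone_nonneg_first nb_le mI_le vecs_def)
  then show ?thesis
    using c_vec b_vec unfolding Tl_def by (force simp: vecs_def tmulv_def mulv_def)
qed

lemma residual_le_dist0_Tl:
  assumes "x \<in> nonneg_first n nb" and "y \<in> nonneg_first m mI"
  shows "res x y \<le> dist0_Tl n m mI nb A b c x y * sqrt ((pnrm n m x y)\<^sup>2 + 1)"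
  unfolding dist0_Tl_def
proof (rule le_cInf_mult)
  show "{pnrm n m v u |v u. (v, u) \<in> Tl n m mI nb A b c x y} \<noteq> {}"
    using affine_part_mem_Tl[OF assms] by blast
  show "res x y \<le> t * sqrt ((pnrm n m x y)\<^sup>2 + 1)"
    if "t \<in> {pnrm n m v u |v u. (v, u) \<in> Tl n m mI nb A b c x y}" for t
    using that residual_le_Tl by (auto simp: mult.commute)
qed simp

lemma theta_set_nonempty:
  assumes "lp_has_optimal n m mI nb A b c"
  shows "{t. 0 \<le> t \<and> (\<forall>x y. x \<in> nonneg_first n nb \<and> y \<in> nonneg_first m mI \<longrightarrow>
      dist_Omega n m mI nb A b c x y \<le> t * res x y)} \<noteq> {}"
proof -
  obtain x0 y0 where "x0 \<in> vecs n" "y0 \<in> vecs m" "pd_optimal x0 y0"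
    using pd_optimal_exists[OF assms] .
  then show ?thesis using Omega_error_bound by blast
qed

lemma theta_nonneg: "lp_has_optimal n m mI nb A b c \<Longrightarrow> 0 \<le> theta n m mI nb A b c"
  unfolding theta_def by (rule cInf_greatest[OF theta_set_nonempty]) auto

lemma dist_Omega_le_theta:
  assumes "lp_has_optimal n m mI nb A b c"
    and "x \<in> nonneg_first n nb" and "y \<in> nonneg_first m mI"
  shows "dist_Omega n m mI nb A b c x y \<le> theta n m mI nb A b c * res x y"
  unfolding theta_def
  by (rule le_cInf_mult[OF theta_set_nonempty[OF assms(1)] residual_nonneg]) (use assms(2,3) in blast)

end

theorem lemma3:
  fixes n m mI nb :: nat and A :: "nat \<Rightarrow> nat \<Rightarrow> real" and b c x y :: "nat \<Rightarrow> real"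
  assumes "1 \<le> nb" and "nb \<le> n" and "mI \<le> m"
    and "c \<in> vecs n" and "b \<in> vecs m"
    and "lp_has_optimal n m mI nb A b c"
    and "x \<in> vecs n" and "y \<in> vecs m"
    and "\<forall>i<nb. 0 \<le> x i" and "\<forall>j<mI. 0 \<le> y j"
  shows "dist_Omega n m mI nb A b c x y
           \<le> theta n m mI nb A b c * sqrt ((pnrm n m x y)\<^sup>2 + 1) * dist0_Tl n m mI nb A b c x y"
proof -
  interpret lp_data n m mI nb A b c
    using assms by unfold_locales
  have x: "x \<in> nonneg_first n nb" and y: "y \<in> nonneg_first m mI"
    using assms by (simp_all add: nonneg_first_def)
  have "dist_Omega n m mI nb A b c x y \<le> theta n m mI nb A b c * res x y"
    using assms(6) x y by (rule dist_Omega_le_theta)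
  also have "\<dots> \<le> theta n m mI nb A b c * (dist0_Tl n m mI nb A b c x y * sqrt ((pnrm n m x y)\<^sup>2 + 1))"
    by (rule mult_left_mono[OF residual_le_dist0_Tl[OF x y] theta_nonneg[OF assms(6)]])
  finally show ?thesis by (simp only: ac_simps)
qed

end
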